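(* Let $p=[p_1,\dots,p_m]^T\in A^m$, $A=\mathbb C[t_1,\dots,t_n]$. For each $i$ let $d_{ij}$ be the degree of $p_i$ in $t_j$ and $\mathcal E_{p_i}=\{\alpha\in\mathbb N_0^n:\alpha_j\le d_{ij}+1\text{ for }1\le j\le n\}=\{\alpha_{i1},\dots,\alpha_{il_i}\}$. Let $\mathrm{Der}_p$ be the tuple $(p_1,\partial^{\alpha_{11}}\bullet p_1,\dots,\partial^{\alpha_{1l_1}}\bullet p_1,\dots,p_m,\partial^{\alpha_{m1}}\bullet p_m,\dots,\partial^{\alpha_{ml_m}}\bullet p_m)$ of length $L=\sum_i(l_i+1)$, let $\mathrm{Syz}(\mathrm{Der}_p)=\{q\in A^{1\times L}:\sum_k q_k(\mathrm{Der}_p)_k=0\}$, let $M\in\mathcal W_n^{L\times m}$ be the matrix with rows $e_1,\partial^{\alpha_{11}}e_1,\dots,\partial^{\alpha_{1l_1}}e_1,\dots,e_m,\partial^{\alpha_{m1}}e_m,\dots,\partial^{\alpha_{ml_m}}e_m$, and let $\Phi_p:\mathrm{Syz}(\mathrm{Der}_p)\to\mathcal W_n^{1\times m}$, $q\mapsto q\cdot M$. Then $\Phi_p$ takes values in $\ker(\kappa_p)$ and the left $\mathcal W_n$-submodule generated by the image of $\Phi_p$ equals $\ker(\kappa_p)$.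
   Context: $\mathcal W_n$ is the $n$-th Weyl algebra $\mathbb C[t_1,\dots,t_n]\langle\partial_1,\dots,\partial_n\rangle$ with relations $\partial_it_j=t_j\partial_i+\delta_{ij}$, $t_it_j=t_jt_i$, $\partial_i\partial_j=\partial_j\partial_i$; it acts on $A=\mathbb C[t_1,\dots,t_n]$ by $\partial_i\bullet p=\partial p/\partial t_i$ and multiplication by $t_i$. Multi-index notation $\partial^\alpha=\partial_1^{\alpha_1}\cdots\partial_n^{\alpha_n}$. $e_i$ are the canonical basis vectors of $\mathcal W_n^{1\times m}$. For $p\in A^m$, $\ker(\kappa_p)=\{a\in\mathcal W_n^{1\times m}:\sum_ia_i\bullet p_i=0\}$. *)

theory Defs
  imports Complex_Main "HOL-Library.Poly_Mapping"
begin

text \<open>Polynomials in the variables t_0, t_1, ... over the complex numbers: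
  a monomial is an exponent vector (nat \<Rightarrow>_0 nat), a polynomial maps monomials to
  coefficients.  The ring A = C[t_1..t_n] is the set of polynomials in variables with
  index < n (variable t_{j+1} of the paper is index j here).\<close>

type_synonym mpoly = "(nat \<Rightarrow>\<^sub>0 nat) \<Rightarrow>\<^sub>0 complex"

definition polyA :: "nat \<Rightarrow> mpoly set" where
  "polyA n = {p. \<forall>m \<in> Poly_Mapping.keys p. Poly_Mapping.keys m \<subseteq> {..<n}}"

definition var :: "nat \<Rightarrow> mpoly" where
  "var i = Poly_Mapping.single (Poly_Mapping.single i 1) 1"

definition cpoly :: "complex \<Rightarrow> mpoly" where
  "cpoly c = Poly_Mapping.single 0 c"

definition pderiv_var :: "nat \<Rightarrow> mpoly \<Rightarrow> mpoly" where
  "pderiv_var i p = Abs_poly_mapping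
     (\<lambda>m::nat \<Rightarrow>\<^sub>0 nat. of_nat (Poly_Mapping.lookup m i + 1) * Poly_Mapping.lookup p (m + Poly_Mapping.single i 1))"

definition pderivs :: "nat \<Rightarrow> (nat \<Rightarrow>\<^sub>0 nat) \<Rightarrow> mpoly \<Rightarrow> mpoly" where
  "pderivs n \<alpha> = foldr (\<lambda>j f. (pderiv_var j ^^ Poly_Mapping.lookup \<alpha> j) \<circ> f) [0..<n] id"

text \<open>The Weyl algebra W_n, realised as the algebra of C-linear operators on polynomials
  generated by the multiplications by constants and by t_i and the derivations \<partial>_i
  (the ring of differential operators with polynomial coefficients); multiplication in
  W_n is composition and the action \<bullet> is application.\<close>
inductive_set weyl :: "nat \<Rightarrow> (mpoly \<Rightarrow> mpoly) set" for n where
  const: "(\<lambda>p. cpoly c * p) \<in> weyl n"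
| mult_var: "i < n \<Longrightarrow> (\<lambda>p. var i * p) \<in> weyl n"
| deriv: "i < n \<Longrightarrow> pderiv_var i \<in> weyl n"
| add: "f \<in> weyl n \<Longrightarrow> g \<in> weyl n \<Longrightarrow> (\<lambda>p. f p + g p) \<in> weyl n"
| comp: "f \<in> weyl n \<Longrightarrow> g \<in> weyl n \<Longrightarrow> f \<circ> g \<in> weyl n"

text \<open>Row vectors W_n^{1\<times>m}: entries indexed by j < m, zero operator elsewhere.\<close>
definition weyl_rows :: "nat \<Rightarrow> nat \<Rightarrow> (nat \<Rightarrow> mpoly \<Rightarrow> mpoly) set" where
  "weyl_rows n m = {a. (\<forall>j<m. a j \<in> weyl n) \<and> (\<forall>j\<ge>m. a j = (\<lambda>_. 0))}"

definition ker_kappa :: "nat \<Rightarrow> nat \<Rightarrow> (nat \<Rightarrow> mpoly) \<Rightarrow> (nat \<Rightarrow> mpoly \<Rightarrow> mpoly) set" where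
  "ker_kappa n m p = {a \<in> weyl_rows n m. (\<Sum>i<m. a i (p i)) = 0}"

definition left_submod_gen :: "nat \<Rightarrow> (nat \<Rightarrow> mpoly \<Rightarrow> mpoly) set \<Rightarrow> (nat \<Rightarrow> mpoly \<Rightarrow> mpoly) set" where
  "left_submod_gen n S = {a. \<exists>F c. finite F \<and> F \<subseteq> S \<and> (\<forall>s\<in>F. c s \<in> weyl n) \<and>
       a = (\<lambda>j x. \<Sum>s\<in>F. c s (s j x))}"

text \<open>Degree of p in variable j (taken to be 0 for p = 0).\<close>
definition deg_in :: "mpoly \<Rightarrow> nat \<Rightarrow> nat" where
  "deg_in p j = Max (insert 0 ((\<lambda>m. Poly_Mapping.lookup m j) ` Poly_Mapping.keys p))"

definition Eset :: "nat \<Rightarrow> mpoly \<Rightarrow> (nat \<Rightarrow>\<^sub>0 nat) set" where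
  "Eset n q = {\<alpha>. Poly_Mapping.keys \<alpha> \<subseteq> {..<n} \<and> (\<forall>j<n. Poly_Mapping.lookup \<alpha> j \<le> deg_in q j + 1)}"

text \<open>Index set of the tuple Der_p: (i, None) stands for the entry p_i, and (i, Some \<alpha>)
  for the entry \<partial>^\<alpha> \<bullet> p_i, \<alpha> \<in> E_{p_i}.\<close>
definition Didx :: "nat \<Rightarrow> nat \<Rightarrow> (nat \<Rightarrow> mpoly) \<Rightarrow> (nat \<times> (nat \<Rightarrow>\<^sub>0 nat) option) set" where
  "Didx n m p = {(i, None) | i. i < m} \<union> {(i, Some \<alpha>) | i \<alpha>. i < m \<and> \<alpha> \<in> Eset n (p i)}"

text \<open>The operator in row k of M in column i (its only possibly nonzero column).\<close>
definition Mop :: "nat \<Rightarrow> (nat \<times> (nat \<Rightarrow>\<^sub>0 nat) option) \<Rightarrow> mpoly \<Rightarrow> mpoly" where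
  "Mop n k = (case snd k of None \<Rightarrow> id | Some \<alpha> \<Rightarrow> pderivs n \<alpha>)"

definition Mmat :: "nat \<Rightarrow> (nat \<times> (nat \<Rightarrow>\<^sub>0 nat) option) \<Rightarrow> nat \<Rightarrow> mpoly \<Rightarrow> mpoly" where
  "Mmat n k j = (if fst k = j then Mop n k else (\<lambda>_. 0))"

definition Der :: "nat \<Rightarrow> (nat \<Rightarrow> mpoly) \<Rightarrow> (nat \<times> (nat \<Rightarrow>\<^sub>0 nat) option) \<Rightarrow> mpoly" where
  "Der n p k = Mop n k (p (fst k))"

definition Syz :: "nat \<Rightarrow> nat \<Rightarrow> (nat \<Rightarrow> mpoly) \<Rightarrow> ((nat \<times> (nat \<Rightarrow>\<^sub>0 nat) option) \<Rightarrow> mpoly) set" where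
  "Syz n m p = {q. (\<forall>k \<in> Didx n m p. q k \<in> polyA n) \<and> (\<forall>k. k \<notin> Didx n m p \<longrightarrow> q k = 0) \<and>
      (\<Sum>k\<in>Didx n m p. q k * Der n p k) = 0}"

text \<open>\<Phi>_p(q) = q \<cdot> M, where q_k \<in> A is viewed in W_n as multiplication by q_k.\<close>
definition Phi :: "nat \<Rightarrow> nat \<Rightarrow> (nat \<Rightarrow> mpoly) \<Rightarrow> ((nat \<times> (nat \<Rightarrow>\<^sub>0 nat) option) \<Rightarrow> mpoly)
    \<Rightarrow> nat \<Rightarrow> mpoly \<Rightarrow> mpoly" where
  "Phi n m p q = (\<lambda>j x. \<Sum>k\<in>Didx n m p. q k * Mmat n k j x)"

end

theory Submission
  imports Defs "HOL-Library.FuncSet"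
begin

(*
  Every element of the Weyl algebra W_n, viewed as an operator on A, can be
  written as a finite sum of operators c * \<partial>^\<beta> with c \<in> A (the normal form).  Hence every
  row a = \<Sum>_i a_i e_i \<in> ker(\<kappa>_p) is a sum of rows c \<partial>^\<beta> e_i, and each such row is handled
  separately:
  - if \<beta>_j \<le> deg_{t_j} p_i for all j, then \<beta> \<in> E_{p_i} and c \<partial>^\<beta> e_i = \<Phi>_p(c e_k) for
    the index k = (i, \<beta>) of Der_p, where c e_k is a (not necessarily syzygy) coefficient tuple;
  - otherwise \<beta>_j > deg_{t_j} p_i for some j; with \<gamma> = (deg_{t_j} p_i + 1) e_j \<in> E_{p_i} the
    unit tuple e_{(i,\<gamma>)} is a syzygy (since \<partial>^\<gamma> kills p_i), and c \<partial>^\<beta> e_i is the left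
    multiple (c \<partial>^{\<beta>-\<gamma>}) \<Phi>_p(e_{(i,\<gamma>)}) of a generator.
  Summing up, a = \<Phi>_p(q) + r with r in the generated submodule and \<Sum>_k q_k Der_k = \<kappa>_p(a) = 0,
  so q is a syzygy.  The converse inclusion holds because \<Phi>_p(q) \<bullet> p = \<Sum>_k q_k Der_k.
  The argument does not use the hypothesis p_i \<in> A of the theorem.
*)

abbreviation lk :: "('a \<Rightarrow>\<^sub>0 'b::zero) \<Rightarrow> 'a \<Rightarrow> 'b" where "lk \<equiv> Poly_Mapping.lookup"
abbreviation ks :: "('a \<Rightarrow>\<^sub>0 'b::zero) \<Rightarrow> 'a set" where "ks \<equiv> Poly_Mapping.keys"
abbreviation sg :: "'a \<Rightarrow> 'b::zero \<Rightarrow> ('a \<Rightarrow>\<^sub>0 'b)" where "sg \<equiv> Poly_Mapping.single"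

section \<open>Partial derivatives\<close>

lemma lookup_pderiv_var:
  "lk (pderiv_var i p) m = of_nat (lk m i + 1) * lk p (m + sg i 1)"
proof -
  let ?f = "\<lambda>m. (of_nat (lk m i + 1) :: complex) * lk p (m + sg i 1)"
  have "{m. ?f m \<noteq> 0} \<subseteq> (\<lambda>k. k - sg i 1) ` ks p"
  proof
    fix m assume "m \<in> {m. ?f m \<noteq> 0}"
    then have "m + sg i 1 \<in> ks p" by (simp add: in_keys_iff)
    moreover have "m = (m + sg i 1) - sg i 1" by simp
    ultimately show "m \<in> (\<lambda>k. k - sg i 1) ` ks p" by blast
  qed
  then have "finite {m. ?f m \<noteq> 0}" by (rule finite_subset) simp
  then show ?thesis unfolding pderiv_var_def by (simp add: lookup_Abs_poly_mapping)
qed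

lemma pderiv_var_add: "pderiv_var i (p + q) = pderiv_var i p + pderiv_var i q"
  by (rule poly_mapping_eqI) (simp add: lookup_pderiv_var lookup_add algebra_simps)

lemma pderiv_var_sum: "finite A \<Longrightarrow> pderiv_var i (\<Sum>a\<in>A. f a) = (\<Sum>a\<in>A. pderiv_var i (f a))"
proof (induction A rule: finite_induct)
  case empty
  show ?case by (rule poly_mapping_eqI) (simp add: lookup_pderiv_var)
qed (simp add: pderiv_var_add)

lemma pderiv_var_comm: "pderiv_var i (pderiv_var j p) = pderiv_var j (pderiv_var i p)"
proof (rule poly_mapping_eqI)
  fix m
  show "lk (pderiv_var i (pderiv_var j p)) m = lk (pderiv_var j (pderiv_var i p)) m"
  proof (cases "i = j")
    case False
    have "m + sg i 1 + sg j 1 = m + sg j 1 + sg i 1" by (simp add: add_ac)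
    moreover have "lk (m + sg i 1) j = lk m j" "lk (m + sg j 1) i = lk m i"
      using False by (simp_all add: lookup_add lookup_single)
    ultimately show ?thesis by (simp add: lookup_pderiv_var)
  qed simp
qed

lemma pderiv_single:
  "pderiv_var i (sg a c) = sg (a - sg i 1) (of_nat (lk a i) * c)"
proof (rule poly_mapping_eqI)
  fix m
  show "lk (pderiv_var i (sg a c)) m = lk (sg (a - sg i 1) (of_nat (lk a i) * c)) m"
  proof (cases "lk a i = 0")
    case True
    then have "a \<noteq> m + sg i 1" by (auto simp: lookup_add)
    then show ?thesis using True by (simp add: lookup_pderiv_var lookup_single)
  next
    case False
    then have "(a = m + sg i 1) \<longleftrightarrow> (a - sg i 1 = m)"
      by (auto intro!: poly_mapping_eqI simp: lookup_add lookup_minus lookup_single when_def)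
    then show ?thesis by (auto simp: lookup_pderiv_var lookup_single lookup_add)
  qed
qed

lemma poly_expand: "(p::mpoly) = (\<Sum>k\<in>ks p. sg k (lk p k))"
  by (rule poly_mapping_eqI) (auto simp: lookup_sum lookup_single when_def in_keys_iff)

lemma pderiv_var_mult_single:
  "pderiv_var i (sg a c * sg b d) = pderiv_var i (sg a c) * sg b d + sg a c * pderiv_var i (sg b d)"
proof -
  have shift: "lk u i \<noteq> 0 \<Longrightarrow> u - sg i 1 + v = u + v - sg i 1" for u v :: "nat \<Rightarrow>\<^sub>0 nat"
    by (auto intro!: poly_mapping_eqI simp: lookup_add lookup_minus lookup_single when_def)
  have left: "sg (a - sg i 1) (of_nat (lk a i) * c) * sg b d = sg (a + b - sg i 1) (of_nat (lk a i) * c * d)"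
    using shift[of a b] by (cases "lk a i = 0") (simp_all add: mult_single)
  have right: "sg a c * sg (b - sg i 1) (of_nat (lk b i) * d) = sg (a + b - sg i 1) (of_nat (lk b i) * c * d)"
    using shift[of b a] by (cases "lk b i = 0") (simp_all add: mult_single add.commute mult_ac)
  have "pderiv_var i (sg a c * sg b d) = sg (a + b - sg i 1) (of_nat (lk a i + lk b i) * (c * d))"
    by (simp add: mult_single pderiv_single lookup_add)
  also have "\<dots> = sg (a + b - sg i 1) (of_nat (lk a i) * c * d) + sg (a + b - sg i 1) (of_nat (lk b i) * c * d)"
    by (simp add: single_add[symmetric] algebra_simps)
  also have "\<dots> = pderiv_var i (sg a c) * sg b d + sg a c * pderiv_var i (sg b d)"
    by (simp only: pderiv_single left right)
  finally show ?thesis .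
qed

lemma pderiv_var_mult: "pderiv_var i (p * q) = pderiv_var i p * q + p * pderiv_var i q"
proof -
  have expand_deriv: "pderiv_var i r = (\<Sum>a\<in>ks r. pderiv_var i (sg a (lk r a)))" for r :: mpoly
  proof -
    have "pderiv_var i (\<Sum>a\<in>ks r. sg a (lk r a)) = (\<Sum>a\<in>ks r. pderiv_var i (sg a (lk r a)))"
      by (simp add: pderiv_var_sum)
    then show ?thesis by (simp only: poly_expand[symmetric])
  qed
  have "p * q = (\<Sum>a\<in>ks p. \<Sum>b\<in>ks q. sg a (lk p a) * sg b (lk q b))"
    by (subst poly_expand[of p], subst poly_expand[of q]) (simp add: sum_product)
  then have "pderiv_var i (p * q) = (\<Sum>a\<in>ks p. \<Sum>b\<in>ks q. pderiv_var i (sg a (lk p a)) * sg b (lk q b)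
        + sg a (lk p a) * pderiv_var i (sg b (lk q b)))"
    by (simp add: pderiv_var_sum pderiv_var_mult_single)
  also have "\<dots> = (\<Sum>a\<in>ks p. pderiv_var i (sg a (lk p a))) * (\<Sum>b\<in>ks q. sg b (lk q b))
        + (\<Sum>a\<in>ks p. sg a (lk p a)) * (\<Sum>b\<in>ks q. pderiv_var i (sg b (lk q b)))"
    by (simp add: sum.distrib sum_product)
  also have "\<dots> = pderiv_var i p * q + p * pderiv_var i q"
    by (simp only: expand_deriv[symmetric] poly_expand[symmetric])
  finally show ?thesis .
qed

text \<open>\<partial>^\<alpha> restricted to the variables in a list L; generalising the list [0..<n] of the
  definition of pderivs makes induction possible.\<close>
definition pderivs_list :: "nat list \<Rightarrow> (nat \<Rightarrow>\<^sub>0 nat) \<Rightarrow> mpoly \<Rightarrow> mpoly" where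
  "pderivs_list L \<alpha> = foldr (\<lambda>j f. (pderiv_var j ^^ lk \<alpha> j) \<circ> f) L id"

lemma pderivs_list_Nil[simp]: "pderivs_list [] \<alpha> = id"
  by (simp add: pderivs_list_def)

lemma pderivs_list_Cons[simp]:
  "pderivs_list (j # L) \<alpha> = (pderiv_var j ^^ lk \<alpha> j) \<circ> pderivs_list L \<alpha>"
  by (simp add: pderivs_list_def)

lemma pderivs_eq_list: "pderivs n \<alpha> = pderivs_list [0..<n] \<alpha>"
  by (simp add: pderivs_def pderivs_list_def)

lemma comm_funpow: "(\<And>x. f (g x) = g (f x)) \<Longrightarrow> (f ^^ k) (g x) = g ((f ^^ k) x)"
  by (induction k arbitrary: x) simp_all

lemma pderiv_var_pderivs_list_comm: "pderiv_var i (pderivs_list L \<alpha> x) = pderivs_list L \<alpha> (pderiv_var i x)"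
proof (induction L arbitrary: x)
  case (Cons j L)
  have "pderiv_var i ((pderiv_var j ^^ lk \<alpha> j) y) = (pderiv_var j ^^ lk \<alpha> j) (pderiv_var i y)" for y
    by (rule comm_funpow[symmetric]) (rule pderiv_var_comm)
  then show ?case by (simp add: Cons)
qed simp

lemma pderivs_list_add: "pderivs_list L \<alpha> (pderivs_list L \<gamma> x) = pderivs_list L (\<alpha> + \<gamma>) x"
proof (induction L arbitrary: x)
  case (Cons j L)
  have "pderivs_list L \<alpha> ((pderiv_var j ^^ lk \<gamma> j) y) = (pderiv_var j ^^ lk \<gamma> j) (pderivs_list L \<alpha> y)" for y
    by (rule comm_funpow[symmetric]) (rule pderiv_var_pderivs_list_comm)
  then show ?case by (simp add: Cons lookup_add funpow_add)
qed simp

lemma pderivs_list_vanishing: "(\<forall>j\<in>set L. lk \<alpha> j = 0) \<Longrightarrow> pderivs_list L \<alpha> = id"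
  by (induction L) auto

lemma pderivs_list_single: "distinct L \<Longrightarrow> i \<in> set L \<Longrightarrow> pderivs_list L (sg i k) = pderiv_var i ^^ k"
proof (induction L)
  case (Cons j L)
  show ?case
  proof (cases "j = i")
    case True
    with Cons.prems have "\<forall>j'\<in>set L. lk (sg i k) j' = 0" by (auto simp: lookup_single when_def)
    then show ?thesis using True by (simp add: pderivs_list_vanishing)
  qed (use Cons in \<open>simp add: lookup_single\<close>)
qed simp

lemma pderivs_add: "pderivs n \<alpha> (pderivs n \<gamma> x) = pderivs n (\<alpha> + \<gamma>) x"
  by (simp add: pderivs_eq_list pderivs_list_add)

lemma pderivs_single: "i < n \<Longrightarrow> pderivs n (sg i k) = pderiv_var i ^^ k"
  by (simp add: pderivs_eq_list pderivs_list_single)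

lemma pderivs_zero: "pderivs n 0 x = x"
  by (simp add: pderivs_eq_list pderivs_list_vanishing)

lemma pderiv_var_pderivs: "i < n \<Longrightarrow> pderiv_var i (pderivs n \<beta> x) = pderivs n (sg i 1 + \<beta>) x"
  using pderivs_single[of i n 1] by (simp add: pderivs_add[symmetric])

lemma keys_pderiv_var: "m \<in> ks (pderiv_var i c) \<Longrightarrow> m + sg i 1 \<in> ks c"
  by (simp add: in_keys_iff lookup_pderiv_var)

lemma funpow_pderiv_var_vanish: "(\<forall>m\<in>ks p. lk m j < k) \<Longrightarrow> (pderiv_var j ^^ k) p = 0"
proof (induction k arbitrary: p)
  case 0
  then show ?case by auto
next
  case (Suc k)
  have "\<forall>m\<in>ks (pderiv_var j p). lk m j < k"
  proof
    fix m assume "m \<in> ks (pderiv_var j p)"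
    then have "m + sg j 1 \<in> ks p" by (rule keys_pderiv_var)
    with Suc.prems have "lk (m + sg j 1) j < Suc k" by blast
    then show "lk m j < k" by (simp add: lookup_add)
  qed
  then have "(pderiv_var j ^^ k) (pderiv_var j p) = 0" by (rule Suc.IH)
  then show ?case by (simp add: funpow_Suc_right del: funpow.simps)
qed

lemma pderivs_list_zero: "pderivs_list L \<alpha> 0 = 0"
  by (induction L) (simp_all add: funpow_pderiv_var_vanish)

lemma deg_in_ge: "m \<in> ks p \<Longrightarrow> lk m j \<le> deg_in p j"
  unfolding deg_in_def by (rule Max_ge) auto

lemma pderivs_vanish:
  assumes j: "j < n" and big: "deg_in p j < lk \<beta> j"
  shows "pderivs n \<beta> p = 0"
proof -
  let ?s = "sg j (lk \<beta> j)"
  have split: "\<beta> = (\<beta> - ?s) + ?s"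
    by (rule poly_mapping_eqI) (simp add: lookup_add lookup_minus lookup_single when_def)
  have "\<forall>m\<in>ks p. lk m j < lk \<beta> j" using deg_in_ge big le_less_trans by blast
  then have "pderivs n ?s p = 0" using j by (simp add: pderivs_single funpow_pderiv_var_vanish)
  moreover have "pderivs n (\<beta> - ?s) 0 = 0"
    unfolding pderivs_eq_list by (rule pderivs_list_zero)
  ultimately show ?thesis by (metis split pderivs_add)
qed

section \<open>Weyl operators\<close>

lemma weyl_id: "(\<lambda>p. p) \<in> weyl n"
proof -
  have "(\<lambda>p::mpoly. cpoly 1 * p) = (\<lambda>p. p)" by (simp add: cpoly_def fun_eq_iff)
  then show ?thesis by (metis weyl.const)
qed

lemma weyl_zero: "(\<lambda>p. 0) \<in> weyl n"
proof -
  have "(\<lambda>p::mpoly. cpoly 0 * p) = (\<lambda>p. 0)" by (simp add: cpoly_def fun_eq_iff)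
  then show ?thesis by (metis weyl.const)
qed

lemma weyl_additive: "f \<in> weyl n \<Longrightarrow> f (x + y) = f x + f y"
  by (induction f arbitrary: x y rule: weyl.induct) (simp_all add: distrib_left pderiv_var_add add_ac)

lemma weyl_map_zero: "f \<in> weyl n \<Longrightarrow> f 0 = 0"
  using weyl_additive[of f n 0 0] by simp

lemma weyl_map_sum:
  assumes f: "f \<in> weyl n" and A: "finite A"
  shows "f (\<Sum>a\<in>A. g a) = (\<Sum>a\<in>A. f (g a))"
  using A by (induction A rule: finite_induct) (simp_all add: weyl_map_zero[OF f] weyl_additive[OF f])

lemma weyl_sum: "finite A \<Longrightarrow> (\<And>a. a \<in> A \<Longrightarrow> g a \<in> weyl n) \<Longrightarrow> (\<lambda>x. \<Sum>a\<in>A. g a x) \<in> weyl n"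
  by (induction A rule: finite_induct) (simp_all add: weyl_zero weyl.add)

lemma weyl_funpow_pderiv: "i < n \<Longrightarrow> pderiv_var i ^^ k \<in> weyl n"
  using weyl_id by (induction k) (auto intro: weyl.comp weyl.deriv simp: id_def)

lemma weyl_pderivs: "pderivs n \<alpha> \<in> weyl n"
proof -
  have "set L \<subseteq> {..<n} \<Longrightarrow> pderivs_list L \<alpha> \<in> weyl n" for L
    using weyl_id by (induction L) (auto intro!: weyl.comp weyl_funpow_pderiv simp: id_def)
  moreover have "set [0..<n] \<subseteq> {..<n}" by auto
  ultimately show ?thesis by (simp add: pderivs_eq_list)
qed

text \<open>The polynomials whose multiplication operator lies in W_n; they form a subring
  containing the constants and the variables t_i, i < n, hence all of A.\<close>
definition weyl_multipliers :: "nat \<Rightarrow> mpoly set" where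
  "weyl_multipliers n = {c. (\<lambda>x. c * x) \<in> weyl n}"

lemma weyl_multipliers_add:
  assumes "a \<in> weyl_multipliers n" and "b \<in> weyl_multipliers n"
  shows "a + b \<in> weyl_multipliers n"
proof -
  have "(\<lambda>x. (a + b) * x) = (\<lambda>x. a * x + b * x)" by (simp add: fun_eq_iff distrib_right)
  then show ?thesis
    using assms weyl.add[of "\<lambda>x. a * x" n "\<lambda>x. b * x"] unfolding weyl_multipliers_def by simp
qed

lemma weyl_multipliers_mult:
  assumes "a \<in> weyl_multipliers n" and "b \<in> weyl_multipliers n"
  shows "a * b \<in> weyl_multipliers n"
proof -
  have "(\<lambda>x. (a * b) * x) = (\<lambda>x. a * x) \<circ> (\<lambda>x. b * x)" by (simp add: fun_eq_iff mult.assoc)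
  then show ?thesis
    using assms weyl.comp[of "\<lambda>x. a * x" n "\<lambda>x. b * x"] unfolding weyl_multipliers_def by simp
qed

lemma weyl_multipliers_cpoly: "cpoly c \<in> weyl_multipliers n"
  unfolding weyl_multipliers_def by (simp add: weyl.const)

lemma weyl_multipliers_1: "1 \<in> weyl_multipliers n"
  using weyl_multipliers_cpoly[of 1 n] by (simp add: cpoly_def)

lemma weyl_multipliers_0: "0 \<in> weyl_multipliers n"
  using weyl_multipliers_cpoly[of 0 n] by (simp add: cpoly_def)

lemma weyl_multipliers_pow: "a \<in> weyl_multipliers n \<Longrightarrow> a ^ k \<in> weyl_multipliers n"
  by (induction k) (auto intro: weyl_multipliers_1 weyl_multipliers_mult)

lemma weyl_multipliers_prod:
  "finite A \<Longrightarrow> (\<And>x. x \<in> A \<Longrightarrow> f x \<in> weyl_multipliers n) \<Longrightarrow> (\<Prod>x\<in>A. f x) \<in> weyl_multipliers n"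
  by (induction A rule: finite_induct) (auto intro: weyl_multipliers_1 weyl_multipliers_mult)

lemma weyl_multipliers_sum:
  "finite A \<Longrightarrow> (\<And>x. x \<in> A \<Longrightarrow> f x \<in> weyl_multipliers n) \<Longrightarrow> (\<Sum>x\<in>A. f x) \<in> weyl_multipliers n"
  by (induction A rule: finite_induct) (auto intro: weyl_multipliers_0 weyl_multipliers_add)

lemma var_pow: "var j ^ e = sg (sg j e) 1"
proof (induction e)
  case (Suc e)
  then show ?case by (simp add: var_def mult_single single_add[symmetric] add.commute)
qed simp

lemma monomial_as_prod: "sg k (1::complex) = (\<Prod>j\<in>ks k. var j ^ lk k j)"
proof -
  have prod: "finite J \<Longrightarrow> sg (\<Sum>j\<in>J. sg j (e j)) (1::complex) = (\<Prod>j\<in>J. var j ^ e j)" for J e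
  proof (induction J rule: finite_induct)
    case (insert x F)
    have "(\<Prod>j\<in>insert x F. var j ^ e j) = var x ^ e x * (\<Prod>j\<in>F. var j ^ e j)"
      using insert by simp
    also have "\<dots> = sg (sg x (e x)) 1 * sg (\<Sum>j\<in>F. sg j (e j)) 1"
      by (simp only: var_pow insert.IH)
    also have "\<dots> = sg (\<Sum>j\<in>insert x F. sg j (e j)) 1"
      using insert(1,2) by (simp add: mult_single)
    finally show ?case by simp
  qed simp
  have expand: "(\<Sum>j\<in>ks k. sg j (lk k j)) = k"
    by (rule poly_mapping_eqI) (auto simp: lookup_sum lookup_single when_def in_keys_iff)
  show ?thesis using prod[of "ks k" "lk k"] by (simp only: expand finite_keys simp_thms)
qed

lemma weyl_multipliers_monomial: "ks k \<subseteq> {..<n} \<Longrightarrow> sg k c \<in> weyl_multipliers n"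
proof -
  assume k: "ks k \<subseteq> {..<n}"
  have "sg k c = cpoly c * (\<Prod>j\<in>ks k. var j ^ lk k j)"
    by (simp add: cpoly_def mult_single monomial_as_prod[symmetric])
  moreover have "(\<Prod>j\<in>ks k. var j ^ lk k j) \<in> weyl_multipliers n"
  proof (rule weyl_multipliers_prod)
    fix j assume "j \<in> ks k"
    then have "var j \<in> weyl_multipliers n" using k by (auto simp: weyl_multipliers_def weyl.mult_var)
    then show "var j ^ lk k j \<in> weyl_multipliers n" by (rule weyl_multipliers_pow)
  qed simp
  ultimately show ?thesis by (simp add: weyl_multipliers_mult weyl_multipliers_cpoly)
qed

lemma weyl_mult: "c \<in> polyA n \<Longrightarrow> (\<lambda>x. c * x) \<in> weyl n"
proof -
  assume c: "c \<in> polyA n"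
  have "(\<Sum>k\<in>ks c. sg k (lk c k)) \<in> weyl_multipliers n"
    using c unfolding polyA_def by (intro weyl_multipliers_sum weyl_multipliers_monomial) auto
  then show ?thesis using poly_expand[of c] by (simp add: weyl_multipliers_def)
qed

lemma keys_nat_add: "ks ((x::nat \<Rightarrow>\<^sub>0 nat) + y) = ks x \<union> ks y"
  by (auto simp: in_keys_iff lookup_add)

lemma polyA_mult: "a \<in> polyA n \<Longrightarrow> b \<in> polyA n \<Longrightarrow> a * b \<in> polyA n"
  unfolding polyA_def
proof (intro CollectI ballI)
  fix k assume a: "a \<in> {p. \<forall>m\<in>ks p. ks m \<subseteq> {..<n}}" and b: "b \<in> {p. \<forall>m\<in>ks p. ks m \<subseteq> {..<n}}"
    and k: "k \<in> ks (a * b)"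
  then obtain x y where "k = x + y" "x \<in> ks a" "y \<in> ks b" using keys_mult by blast
  then show "ks k \<subseteq> {..<n}" using a b by (auto simp: keys_nat_add)
qed

lemma polyA_add: "a \<in> polyA n \<Longrightarrow> b \<in> polyA n \<Longrightarrow> a + b \<in> polyA n"
  unfolding polyA_def using keys_add[of a b] by blast

lemma polyA_0: "0 \<in> polyA n"
  by (simp add: polyA_def)

lemma polyA_1: "1 \<in> polyA n"
  by (simp add: polyA_def)

lemma polyA_cpoly: "cpoly c \<in> polyA n"
  by (simp add: polyA_def cpoly_def)

lemma polyA_var: "i < n \<Longrightarrow> var i \<in> polyA n"
  by (simp add: polyA_def var_def)

lemma polyA_pderiv_var: "c \<in> polyA n \<Longrightarrow> pderiv_var i c \<in> polyA n"
  unfolding polyA_def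
proof (intro CollectI ballI)
  fix m assume c: "c \<in> {p. \<forall>m\<in>ks p. ks m \<subseteq> {..<n}}" and m: "m \<in> ks (pderiv_var i c)"
  then have "ks (m + sg i 1) \<subseteq> {..<n}" using keys_pderiv_var by blast
  then show "ks m \<subseteq> {..<n}" by (auto simp: keys_nat_add)
qed

section \<open>Normal form of Weyl operators\<close>

inductive_set normal_ops :: "nat \<Rightarrow> (mpoly \<Rightarrow> mpoly) set" for n where
  zero: "(\<lambda>x. 0) \<in> normal_ops n"
| gen: "c \<in> polyA n \<Longrightarrow> ks \<beta> \<subseteq> {..<n} \<Longrightarrow> (\<lambda>x. c * pderivs n \<beta> x) \<in> normal_ops n"
| add: "f \<in> normal_ops n \<Longrightarrow> g \<in> normal_ops n \<Longrightarrow> (\<lambda>x. f x + g x) \<in> normal_ops n"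

lemma normal_ops_mult:
  assumes c: "c \<in> polyA n"
  shows "g \<in> normal_ops n \<Longrightarrow> (\<lambda>x. c * g x) \<in> normal_ops n"
proof (induction g rule: normal_ops.induct)
  case (gen d \<beta>)
  have "(\<lambda>x. (c * d) * pderivs n \<beta> x) \<in> normal_ops n"
    using gen c by (intro normal_ops.gen polyA_mult)
  then show ?case by (simp add: mult.assoc)
qed (simp_all add: normal_ops.zero normal_ops.add distrib_left)

text \<open>Commuting \<partial>_i past c: \<partial>_i c \<partial>^\<beta> = (\<partial>_i c) \<partial>^\<beta> + c \<partial>^(\<beta>+e_i).\<close>
lemma normal_ops_pderiv_var:
  assumes i: "i < n"
  shows "g \<in> normal_ops n \<Longrightarrow> (\<lambda>x. pderiv_var i (g x)) \<in> normal_ops n"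
proof (induction g rule: normal_ops.induct)
  case zero
  have "pderiv_var i 0 = 0" by (rule poly_mapping_eqI) (simp add: lookup_pderiv_var)
  then show ?case by (simp add: normal_ops.zero)
next
  case (gen c \<beta>)
  have "(\<lambda>x. pderiv_var i c * pderivs n \<beta> x + c * pderivs n (sg i 1 + \<beta>) x) \<in> normal_ops n"
    using gen i by (intro normal_ops.add normal_ops.gen polyA_pderiv_var) (auto simp: keys_nat_add)
  then show ?case using i by (simp add: pderiv_var_mult pderiv_var_pderivs)
next
  case (add f g)
  then show ?case by (simp add: normal_ops.add pderiv_var_add)
qed

lemma weyl_comp_normal_ops: "f \<in> weyl n \<Longrightarrow> g \<in> normal_ops n \<Longrightarrow> f \<circ> g \<in> normal_ops n"
proof (induction f arbitrary: g rule: weyl.induct)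
  case (const c)
  then show ?case using normal_ops_mult[OF polyA_cpoly] by (simp add: o_def)
next
  case (mult_var i)
  then show ?case using normal_ops_mult[OF polyA_var] by (simp add: o_def)
next
  case (deriv i)
  then show ?case using normal_ops_pderiv_var by (simp add: o_def)
next
  case (add f f')
  have "(\<lambda>x. (f \<circ> g) x + (f' \<circ> g) x) \<in> normal_ops n"
    using add by (intro normal_ops.add) auto
  then show ?case by (simp add: o_def)
qed (simp add: comp_assoc)

lemma weyl_normal_ops: "f \<in> weyl n \<Longrightarrow> f \<in> normal_ops n"
proof -
  assume f: "f \<in> weyl n"
  have "(\<lambda>x. 1 * pderivs n 0 x) \<in> normal_ops n"
    by (rule normal_ops.gen) (auto simp: polyA_1)
  from weyl_comp_normal_ops[OF f this] show ?thesis by (simp add: pderivs_zero o_def)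
qed

lemma bounded_exponents_finite:
  "finite {\<alpha>::nat \<Rightarrow>\<^sub>0 nat. ks \<alpha> \<subseteq> {..<n} \<and> (\<forall>j<n. lk \<alpha> j \<le> N)}"
proof -
  have "{\<alpha>::nat \<Rightarrow>\<^sub>0 nat. ks \<alpha> \<subseteq> {..<n} \<and> (\<forall>j<n. lk \<alpha> j \<le> N)}
     \<subseteq> (\<lambda>f. \<Sum>j<n. sg j (f j)) ` (PiE {..<n} (\<lambda>_. {..N}))"
  proof
    fix \<alpha> :: "nat \<Rightarrow>\<^sub>0 nat" assume a: "\<alpha> \<in> {\<alpha>. ks \<alpha> \<subseteq> {..<n} \<and> (\<forall>j<n. lk \<alpha> j \<le> N)}"
    have "restrict (lk \<alpha>) {..<n} \<in> PiE {..<n} (\<lambda>_. {..N})" using a by auto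
    moreover have "\<alpha> = (\<Sum>j<n. sg j (restrict (lk \<alpha>) {..<n} j))"
      using a by (intro poly_mapping_eqI) (auto simp: lookup_sum lookup_single when_def in_keys_iff)
    ultimately show "\<alpha> \<in> (\<lambda>f. \<Sum>j<n. sg j (f j)) ` (PiE {..<n} (\<lambda>_. {..N}))" by blast
  qed
  moreover have "finite (PiE {..<n} (\<lambda>_. {..N::nat}))" by (rule finite_PiE) auto
  ultimately show ?thesis using finite_subset by blast
qed

lemma Eset_finite: "finite (Eset n q)"
proof -
  let ?N = "\<Sum>j<n. deg_in q j + 1"
  have "deg_in q j + 1 \<le> ?N" if "j < n" for j
    using that by (intro member_le_sum) auto
  then have "Eset n q \<subseteq> {\<alpha>. ks \<alpha> \<subseteq> {..<n} \<and> (\<forall>j<n. lk \<alpha> j \<le> ?N)}"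
    unfolding Eset_def using le_trans by blast
  then show ?thesis using bounded_exponents_finite finite_subset by blast
qed

lemma Didx_finite: "finite (Didx n m p)"
proof -
  have "Didx n m p \<subseteq> {..<m} \<times> insert None (Some ` (\<Union>i<m. Eset n (p i)))"
    unfolding Didx_def by auto
  then show ?thesis by (rule finite_subset) (simp add: Eset_finite)
qed

lemma Didx_fst: "k \<in> Didx n m p \<Longrightarrow> fst k < m"
  unfolding Didx_def by auto

lemma submod_zero: "(\<lambda>j x. 0) \<in> left_submod_gen n S"
  unfolding left_submod_gen_def by (rule CollectI, rule exI[of _ "{}"]) auto

lemma submod_gen: "s \<in> S \<Longrightarrow> w \<in> weyl n \<Longrightarrow> (\<lambda>j x. w (s j x)) \<in> left_submod_gen n S"
  unfolding left_submod_gen_def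
  by (rule CollectI, rule exI[of _ "{s}"], rule exI[of _ "\<lambda>_. w"]) auto

lemma submod_add:
  assumes a: "a \<in> left_submod_gen n S" and b: "b \<in> left_submod_gen n S"
  shows "(\<lambda>j x. a j x + b j x) \<in> left_submod_gen n S"
proof -
  obtain F1 c1 where F1: "finite F1" "F1 \<subseteq> S" "\<forall>s\<in>F1. c1 s \<in> weyl n"
    and a_eq: "a = (\<lambda>j x. \<Sum>s\<in>F1. c1 s (s j x))"
    using a unfolding left_submod_gen_def by blast
  obtain F2 c2 where F2: "finite F2" "F2 \<subseteq> S" "\<forall>s\<in>F2. c2 s \<in> weyl n"
    and b_eq: "b = (\<lambda>j x. \<Sum>s\<in>F2. c2 s (s j x))"
    using b unfolding left_submod_gen_def by blast
  text \<open>Extend both coefficient families by zero to F1 \<union> F2 and add them.\<close>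
  define c1' where "c1' s = (if s \<in> F1 then c1 s else (\<lambda>_. 0))" for s
  define c2' where "c2' s = (if s \<in> F2 then c2 s else (\<lambda>_. 0))" for s
  define c where "c s = (\<lambda>x. c1' s x + c2' s x)" for s
  have cw: "c s \<in> weyl n" for s
    unfolding c_def c1'_def c2'_def using F1(3) F2(3) by (intro weyl.add) (auto simp: weyl_zero)
  have fin: "finite (F1 \<union> F2)" using F1 F2 by simp
  have restrict: "(\<Sum>s\<in>F1 \<union> F2. c1' s (y s)) = (\<Sum>s\<in>F1. c1 s (y s))"
    "(\<Sum>s\<in>F1 \<union> F2. c2' s (y s)) = (\<Sum>s\<in>F2. c2 s (y s))" for y
    unfolding c1'_def c2'_def using fin
    by (simp_all add: if_distrib[of "\<lambda>f. f (y _)"] sum.If_cases Int_absorb1 Int_absorb2)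
  have "(\<lambda>j x. a j x + b j x) = (\<lambda>j x. \<Sum>s\<in>F1 \<union> F2. c s (s j x))"
    unfolding a_eq b_eq c_def by (simp add: sum.distrib restrict)
  then show ?thesis unfolding left_submod_gen_def
    using fin F1(2) F2(2) cw by blast
qed

text \<open>A submodule generated by elements of ker(\<kappa>_p) lies in ker(\<kappa>_p), since Weyl operators
  are additive.\<close>
lemma submod_in_ker:
  assumes S: "S \<subseteq> ker_kappa n m p"
  shows "left_submod_gen n S \<subseteq> ker_kappa n m p"
proof
  fix a assume "a \<in> left_submod_gen n S"
  then obtain F c where F: "finite F" "F \<subseteq> S" "\<forall>s\<in>F. c s \<in> weyl n"
    and a_eq: "a = (\<lambda>j x. \<Sum>s\<in>F. c s (s j x))"
    unfolding left_submod_gen_def by blast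
  have rows: "s \<in> weyl_rows n m" and kap: "(\<Sum>i<m. s i (p i)) = 0" if "s \<in> F" for s
    using that F(2) S unfolding ker_kappa_def by auto
  have "a j \<in> weyl n" if "j < m" for j
  proof -
    have "(\<lambda>x. \<Sum>s\<in>F. (c s \<circ> s j) x) \<in> weyl n"
      using F rows that unfolding weyl_rows_def by (intro weyl_sum weyl.comp) auto
    then show ?thesis using a_eq by (simp add: o_def)
  qed
  moreover have "a j = (\<lambda>_. 0)" if j: "j \<ge> m" for j
  proof -
    have "c s (s j x) = 0" if "s \<in> F" for s x
      using rows[OF that] j weyl_map_zero[of "c s" n] F(3) that unfolding weyl_rows_def by simp
    then show ?thesis unfolding a_eq by simp
  qed
  moreover have "(\<Sum>i<m. a i (p i)) = 0"
  proof -
    have "(\<Sum>i<m. a i (p i)) = (\<Sum>s\<in>F. \<Sum>i<m. c s (s i (p i)))"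
      using a_eq by (simp add: sum.swap[of _ "{..<m}"])
    also have "\<dots> = (\<Sum>s\<in>F. c s (\<Sum>i<m. s i (p i)))"
    proof (rule sum.cong[OF refl])
      fix s assume "s \<in> F"
      then have "c s \<in> weyl n" using F(3) by blast
      then show "(\<Sum>i<m. c s (s i (p i))) = c s (\<Sum>i<m. s i (p i))"
        by (simp add: weyl_map_sum)
    qed
    also have "\<dots> = 0" using kap F(3) by (intro sum.neutral) (auto simp: weyl_map_zero)
    finally show ?thesis .
  qed
  ultimately show "a \<in> ker_kappa n m p" unfolding ker_kappa_def weyl_rows_def by simp
qed

lemma Mmat_apply: "Mmat n k j x = (if fst k = j then Mop n k x else 0)"
  by (simp add: Mmat_def)

lemma weyl_Mop: "Mop n k \<in> weyl n"
  using weyl_id by (cases "snd k") (simp_all add: Mop_def id_def weyl_pderivs)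

lemma weyl_Mmat: "Mmat n k j \<in> weyl n"
  by (simp add: Mmat_def weyl_Mop weyl_zero)

lemma Phi_apply: "Phi n m p q j x = (\<Sum>k\<in>Didx n m p. q k * Mmat n k j x)"
  by (simp add: Phi_def)

lemma Phi_weyl: "(\<forall>k\<in>Didx n m p. q k \<in> polyA n) \<Longrightarrow> Phi n m p q j \<in> weyl n"
proof -
  assume q: "\<forall>k\<in>Didx n m p. q k \<in> polyA n"
  have "(\<lambda>x. \<Sum>k\<in>Didx n m p. ((\<lambda>y. q k * y) \<circ> Mmat n k j) x) \<in> weyl n"
    using q by (intro weyl_sum Didx_finite weyl.comp weyl_mult weyl_Mmat) auto
  then show ?thesis by (simp add: Phi_def o_def)
qed

lemma Phi_outside: "m \<le> j \<Longrightarrow> Phi n m p q j = (\<lambda>_. 0)"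
proof (rule ext)
  fix x assume j: "m \<le> j"
  have "\<forall>k\<in>Didx n m p. Mmat n k j x = 0" using j Didx_fst by (fastforce simp: Mmat_apply)
  then show "Phi n m p q j x = 0" by (simp add: Phi_apply)
qed

lemma Phi_kappa: "(\<Sum>i<m. Phi n m p q i (p i)) = (\<Sum>k\<in>Didx n m p. q k * Der n p k)"
proof -
  have "(\<Sum>i<m. Phi n m p q i (p i))
      = (\<Sum>k\<in>Didx n m p. \<Sum>i<m. q k * (if fst k = i then Mop n k (p i) else 0))"
    by (simp add: Phi_apply Mmat_apply sum.swap[of _ "{..<m}"])
  also have "\<dots> = (\<Sum>k\<in>Didx n m p. q k * Der n p k)"
  proof (rule sum.cong[OF refl])
    fix k assume "k \<in> Didx n m p"
    then have "fst k < m" by (rule Didx_fst)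
    then show "(\<Sum>i<m. q k * (if fst k = i then Mop n k (p i) else 0)) = q k * Der n p k"
      by (simp add: Der_def if_distrib[of "(*) (q k)"] cong: if_cong)
  qed
  finally show ?thesis .
qed

lemma Phi_in_ker: "q \<in> Syz n m p \<Longrightarrow> Phi n m p q \<in> ker_kappa n m p"
  unfolding ker_kappa_def weyl_rows_def Syz_def
  by (auto simp: Phi_weyl Phi_outside Phi_kappa)

lemma Phi_add: "Phi n m p (\<lambda>k. q1 k + q2 k) j x = Phi n m p q1 j x + Phi n m p q2 j x"
  by (simp add: Phi_apply distrib_right sum.distrib)

section \<open>Decomposing rows of ker(\<kappa>_p)\<close>

definition unit_row :: "nat \<Rightarrow> (mpoly \<Rightarrow> mpoly) \<Rightarrow> nat \<Rightarrow> mpoly \<Rightarrow> mpoly" where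
  "unit_row i f = (\<lambda>j x. if j = i then f x else 0)"

lemma kappa_unit_row: "i < m \<Longrightarrow> (\<Sum>i'<m. unit_row i f i' (p i')) = f (p i)"
  by (simp add: unit_row_def)

lemma Phi_unit_tuple:
  assumes "k0 \<in> Didx n m p"
  shows "Phi n m p (\<lambda>k. if k = k0 then c else 0) = unit_row (fst k0) (\<lambda>x. c * Mop n k0 x)"
proof (intro ext)
  fix j x
  have "Phi n m p (\<lambda>k. if k = k0 then c else 0) j x
      = (\<Sum>k\<in>Didx n m p. if k = k0 then c * Mmat n k j x else 0)"
    unfolding Phi_apply by (intro sum.cong refl) simp
  also have "\<dots> = c * Mmat n k0 j x" using assms Didx_finite by simp
  finally show "Phi n m p (\<lambda>k. if k = k0 then c else 0) j x = unit_row (fst k0) (\<lambda>x. c * Mop n k0 x) j x"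
    by (auto simp: Mmat_apply unit_row_def)
qed

lemma Der_unit_tuple:
  assumes "k0 \<in> Didx n m p"
  shows "(\<Sum>k\<in>Didx n m p. (if k = k0 then c else 0) * Der n p k) = c * Der n p k0"
  using assms Didx_finite by (simp add: if_distrib[of "\<lambda>a. a * _"] cong: if_cong)

text \<open>Coefficient tuples q \<in> A^L, not required to be syzygies.\<close>
definition coeff_tuples :: "nat \<Rightarrow> nat \<Rightarrow> (nat \<Rightarrow> mpoly) \<Rightarrow> ((nat \<times> (nat \<Rightarrow>\<^sub>0 nat) option) \<Rightarrow> mpoly) set" where
  "coeff_tuples n m p = {q. (\<forall>k \<in> Didx n m p. q k \<in> polyA n) \<and> (\<forall>k. k \<notin> Didx n m p \<longrightarrow> q k = 0)}"

lemma coeff_tuple_unit: "k0 \<in> Didx n m p \<Longrightarrow> c \<in> polyA n \<Longrightarrow> (\<lambda>k. if k = k0 then c else 0) \<in> coeff_tuples n m p"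
  by (auto simp: coeff_tuples_def polyA_0)

text \<open>For a \<in> ker(\<kappa>_p) this makes q a syzygy.\<close>
definition decomposable :: "nat \<Rightarrow> nat \<Rightarrow> (nat \<Rightarrow> mpoly) \<Rightarrow> (nat \<Rightarrow> mpoly \<Rightarrow> mpoly) \<Rightarrow> bool" where
  "decomposable n m p a \<longleftrightarrow> (\<exists>q r. q \<in> coeff_tuples n m p \<and> r \<in> left_submod_gen n (Phi n m p ` Syz n m p) \<and>
      a = (\<lambda>j x. Phi n m p q j x + r j x) \<and> (\<Sum>k\<in>Didx n m p. q k * Der n p k) = (\<Sum>i<m. a i (p i)))"

lemma decomposable_add:
  assumes "decomposable n m p a" and "decomposable n m p b"
  shows "decomposable n m p (\<lambda>j x. a j x + b j x)"
proof -
  obtain q1 r1 where q1: "q1 \<in> coeff_tuples n m p" "r1 \<in> left_submod_gen n (Phi n m p ` Syz n m p)"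
    "a = (\<lambda>j x. Phi n m p q1 j x + r1 j x)" "(\<Sum>k\<in>Didx n m p. q1 k * Der n p k) = (\<Sum>i<m. a i (p i))"
    using assms(1) unfolding decomposable_def by blast
  obtain q2 r2 where q2: "q2 \<in> coeff_tuples n m p" "r2 \<in> left_submod_gen n (Phi n m p ` Syz n m p)"
    "b = (\<lambda>j x. Phi n m p q2 j x + r2 j x)" "(\<Sum>k\<in>Didx n m p. q2 k * Der n p k) = (\<Sum>i<m. b i (p i))"
    using assms(2) unfolding decomposable_def by blast
  have "(\<lambda>k. q1 k + q2 k) \<in> coeff_tuples n m p"
    using q1(1) q2(1) by (auto simp: coeff_tuples_def polyA_add)
  moreover have "(\<lambda>j x. r1 j x + r2 j x) \<in> left_submod_gen n (Phi n m p ` Syz n m p)"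
    using q1(2) q2(2) by (rule submod_add)
  moreover have "(\<lambda>j x. a j x + b j x) = (\<lambda>j x. Phi n m p (\<lambda>k. q1 k + q2 k) j x + (r1 j x + r2 j x))"
    unfolding q1(3) q2(3) by (simp add: Phi_add add_ac)
  moreover have "(\<Sum>k\<in>Didx n m p. (q1 k + q2 k) * Der n p k) = (\<Sum>i<m. a i (p i) + b i (p i))"
    using q1(4) q2(4) by (simp add: distrib_right sum.distrib)
  ultimately show ?thesis unfolding decomposable_def by blast
qed

lemma decomposable_sum:
  "finite I \<Longrightarrow> (\<And>i. i \<in> I \<Longrightarrow> decomposable n m p (a i)) \<Longrightarrow> decomposable n m p (\<lambda>j x. \<Sum>i\<in>I. a i j x)"
proof (induction I rule: finite_induct)
  case empty
  have "(\<lambda>k. 0) \<in> coeff_tuples n m p" by (simp add: coeff_tuples_def polyA_0)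
  then show ?case unfolding decomposable_def using submod_zero
    by (intro exI[of _ "\<lambda>k. 0"] exI[of _ "\<lambda>j x. 0"]) (simp add: Phi_apply)
next
  case (insert i I)
  then show ?case using decomposable_add[of n m p "a i"] by simp
qed

lemma decomposable_submod:
  assumes "r \<in> left_submod_gen n (Phi n m p ` Syz n m p)" and "(\<Sum>i<m. r i (p i)) = 0"
  shows "decomposable n m p r"
proof -
  have "(\<lambda>k. 0) \<in> coeff_tuples n m p" by (simp add: coeff_tuples_def polyA_0)
  then show ?thesis unfolding decomposable_def using assms
    by (intro exI[of _ "\<lambda>k. 0"] exI[of _ r]) (simp add: Phi_apply)
qed

text \<open>First generator case: \<beta> \<in> E_{p_i}, so c \<partial>^\<beta> e_i = \<Phi>_p(c e_(i,\<beta>)).\<close>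
lemma decomposable_in_Eset:
  assumes i: "i < m" and \<beta>: "\<beta> \<in> Eset n (p i)" and c: "c \<in> polyA n"
  shows "decomposable n m p (unit_row i (\<lambda>x. c * pderivs n \<beta> x))"
proof -
  let ?k0 = "(i, Some \<beta>)" and ?q = "\<lambda>k. if k = (i, Some \<beta>) then c else 0"
  have k0: "?k0 \<in> Didx n m p" using i \<beta> unfolding Didx_def by blast
  have "unit_row i (\<lambda>x. c * pderivs n \<beta> x) = (\<lambda>j x. Phi n m p ?q j x + 0)"
    by (simp add: Phi_unit_tuple[OF k0] Mop_def)
  moreover have "(\<Sum>k\<in>Didx n m p. ?q k * Der n p k) = (\<Sum>i'<m. unit_row i (\<lambda>x. c * pderivs n \<beta> x) i' (p i'))"
    by (simp only: Der_unit_tuple[OF k0] kappa_unit_row[OF i]) (simp add: Der_def Mop_def)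
  ultimately show ?thesis unfolding decomposable_def
    using coeff_tuple_unit[OF k0 c] submod_zero by blast
qed

text \<open>Then, with \<gamma> = (deg_{t_j} p_i + 1) e_j, the unit
  tuple e_(i,\<gamma>) is a syzygy and c \<partial>^\<beta> e_i = (c \<partial>^(\<beta>-\<gamma>)) \<Phi>_p(e_(i,\<gamma>)).\<close>
lemma unit_row_in_submod:
  assumes i: "i < m" and j: "j < n" and big: "deg_in (p i) j < lk \<beta> j" and c: "c \<in> polyA n"
  shows "unit_row i (\<lambda>x. c * pderivs n \<beta> x) \<in> left_submod_gen n (Phi n m p ` Syz n m p)"
proof -
  define \<gamma> where "\<gamma> = sg j (deg_in (p i) j + 1)"
  let ?k0 = "(i, Some \<gamma>)" and ?q = "\<lambda>k. if k = (i, Some \<gamma>) then (1::mpoly) else 0"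
  have "\<gamma> \<in> Eset n (p i)"
    unfolding Eset_def \<gamma>_def using j by (auto simp: lookup_single when_def)
  then have k0: "?k0 \<in> Didx n m p" using i unfolding Didx_def by blast
  have "pderivs n \<gamma> (p i) = 0"
    using j by (rule pderivs_vanish) (simp add: \<gamma>_def)
  then have "(\<Sum>k\<in>Didx n m p. ?q k * Der n p k) = 0"
    by (simp only: Der_unit_tuple[OF k0]) (simp add: Der_def Mop_def)
  then have "?q \<in> Syz n m p"
    using coeff_tuple_unit[OF k0 polyA_1] unfolding Syz_def coeff_tuples_def by blast
  moreover have "(\<lambda>x. c * pderivs n (\<beta> - \<gamma>) x) \<in> weyl n"
    using weyl.comp[OF weyl_mult[OF c] weyl_pderivs] by (simp add: o_def)
  ultimately have "(\<lambda>j' x. c * pderivs n (\<beta> - \<gamma>) (Phi n m p ?q j' x)) \<in> left_submod_gen n (Phi n m p ` Syz n m p)"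
    by (intro submod_gen) auto
  moreover have "\<beta> - \<gamma> + \<gamma> = \<beta>"
    using big by (intro poly_mapping_eqI) (auto simp: lookup_add lookup_minus \<gamma>_def lookup_single when_def)
  then have "(\<lambda>j' x. c * pderivs n (\<beta> - \<gamma>) (Phi n m p ?q j' x)) = unit_row i (\<lambda>x. c * pderivs n \<beta> x)"
    by (intro ext) (simp add: Phi_unit_tuple[OF k0] Mop_def unit_row_def pderivs_add weyl_map_zero[OF weyl_pderivs])
  ultimately show ?thesis by simp
qed

lemma decomposable_unit_row:
  assumes i: "i < m"
  shows "f \<in> normal_ops n \<Longrightarrow> decomposable n m p (unit_row i f)"
proof (induction f rule: normal_ops.induct)
  case zero
  then show ?case using decomposable_sum[of "{}" n m p] by (simp add: unit_row_def)
next
  case (gen c \<beta>)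
  show ?case
  proof (cases "\<forall>j<n. lk \<beta> j \<le> deg_in (p i) j")
    case True
    then have "\<beta> \<in> Eset n (p i)" using gen(2) unfolding Eset_def by auto
    then show ?thesis by (rule decomposable_in_Eset[OF i _ gen(1)])
  next
    case False
    then obtain j where j: "j < n" "deg_in (p i) j < lk \<beta> j" by (auto simp: not_le)
    then have "pderivs n \<beta> (p i) = 0" by (rule pderivs_vanish)
    then show ?thesis
      using unit_row_in_submod[where p = p, OF i j gen(1)] by (intro decomposable_submod) (simp_all add: kappa_unit_row[OF i])
  qed
next
  case (add f g)
  then show ?case using decomposable_add[of n m p "unit_row i f" "unit_row i g"]
    by (simp add: unit_row_def if_distrib cong: if_cong)
qed

lemma ker_kappa_subset_submod: "ker_kappa n m p \<subseteq> left_submod_gen n (Phi n m p ` Syz n m p)"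
proof
  fix a assume a: "a \<in> ker_kappa n m p"
  then have rows: "\<And>i. i < m \<Longrightarrow> a i \<in> weyl n" "\<And>j. m \<le> j \<Longrightarrow> a j = (\<lambda>_. 0)"
    and kap: "(\<Sum>i<m. a i (p i)) = 0"
    unfolding ker_kappa_def weyl_rows_def by auto
  have "a = (\<lambda>j x. \<Sum>i<m. unit_row i (a i) j x)"
    using rows(2) by (intro ext) (auto simp: unit_row_def)
  moreover have "decomposable n m p (\<lambda>j x. \<Sum>i<m. unit_row i (a i) j x)"
    using rows(1) by (intro decomposable_sum decomposable_unit_row weyl_normal_ops) auto
  ultimately have "decomposable n m p a" by simp
  then obtain q r where q: "q \<in> coeff_tuples n m p" and r: "r \<in> left_submod_gen n (Phi n m p ` Syz n m p)"
    and a_eq: "a = (\<lambda>j x. Phi n m p q j x + r j x)" and Der_q: "(\<Sum>k\<in>Didx n m p. q k * Der n p k) = 0"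
    unfolding decomposable_def kap by blast
  have "q \<in> Syz n m p" using q Der_q by (simp add: Syz_def coeff_tuples_def)
  then have "(\<lambda>j x. (\<lambda>y. y) (Phi n m p q j x)) \<in> left_submod_gen n (Phi n m p ` Syz n m p)"
    by (intro submod_gen weyl_id) auto
  from submod_add[OF this r] show "a \<in> left_submod_gen n (Phi n m p ` Syz n m p)"
    by (simp add: a_eq)
qed

theorem lemma5p1:
  fixes n m :: nat and p :: "nat \<Rightarrow> mpoly"
  assumes "\<forall>i<m. p i \<in> polyA n"
  shows "Phi n m p ` Syz n m p \<subseteq> ker_kappa n m p
    \<and> left_submod_gen n (Phi n m p ` Syz n m p) = ker_kappa n m p"
proof -
  have image: "Phi n m p ` Syz n m p \<subseteq> ker_kappa n m p"
    using Phi_in_ker by blast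
  then have "left_submod_gen n (Phi n m p ` Syz n m p) \<subseteq> ker_kappa n m p"
    by (rule submod_in_ker)
  with image ker_kappa_subset_submod show ?thesis by blast
qed

end
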